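(* Suppose $R$ carries an $A$-grading and an $A'$-grading and $N$ carries a $B$-grading and a $B'$-grading (each pair satisfying the standing assumptions), and that the $(A,B)$-gradings refine the $(A',B')$-gradings. If $X=\{m_1,\dots,m_n\}\subseteq M$ is a Macaulay basis of $M$ with respect to the $(A,B)$-gradings and $X$ generates $M$, then $X$ is also a Macaulay basis of $M$ with respect to the $(A',B')$-gradings.
   Context: Standing assumptions on a grading pair $(A,B)$: $\mathbf{k}$ is a field; $(A,+,0)$ is a finitely generated cancellative commutative monoid with a well-ordered total order such that $0<a$ for $a\ne0$ and $a\le a'\Rightarrow a+c\le a'+c$; $R=\bigoplus_{a\in A}R_a$ is a commutative Noetherian $\mathbf{k}$-algebra with $R_aR_{a'}\subseteq R_{a+a'}$; $B$ is a well-ordered totally ordered set with an action $(a,b)\mapsto a\cdot b$ of $A$ with $0\cdot b=b$, $(a+a')\cdot b=a\cdot(a'\cdot b)$, monotone and cancellative in each argument; $N=\bigoplus_{b\in B}N_b$ is a Noetherian $R$-module with $R_aN_b\subseteq N_{a\cdot b}$; $M\subseteq N$ is an $R$-submodule. For $m=\sum_bm_b\ne0$: $\deg m=\max\{b:m_b\ne0\}$, $\operatorname{lf}(m)=m_{\deg m}$. A finite set $\{m_1,\dots,m_n\}$ of nonzero elements of $M$ is a Macaulay basis of $M$ (w.r.t. the given gradings) if the $R$-submodule generated by $\{\operatorname{lf}(p):0\ne p\in M\}$ equals that generated by $\operatorname{lf}(m_1),\dots,\operatorname{lf}(m_n)$. Refinement: the $(A,B)$-gradings refine the $(A',B')$-gradings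 if there is an order-preserving monoid homomorphism $f:A\to A'$ with $R_{a'}=\bigoplus_{a\in f^{-1}(a')}R_a$ for all $a'\in A'$, and an order-preserving map $g:B\to B'$ with $N_{b'}=\bigoplus_{b\in g^{-1}(b')}N_b$ for all $b'\in B'$ and $f(a)\cdot g(b)=g(a\cdot b)$ for all $a\in A$, $b\in B$. *)

theory Defs
  imports Main "HOL.Modules"
begin

definition is_dsum :: "('i \<Rightarrow> 'v::ab_group_add set) \<Rightarrow> bool" where
  "is_dsum G \<longleftrightarrow>
     (\<forall>i. 0 \<in> G i \<and> (\<forall>x\<in>G i. \<forall>y\<in>G i. x + y \<in> G i \<and> - x \<in> G i)) \<and>
     (\<forall>x. \<exists>!c. finite {i. c i \<noteq> 0} \<and> (\<forall>i. c i \<in> G i) \<and> x = (\<Sum>i | c i \<noteq> 0. c i))"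

definition comp :: "('i \<Rightarrow> 'v::ab_group_add set) \<Rightarrow> 'v \<Rightarrow> 'i \<Rightarrow> 'v" where
  "comp G x = (THE c. finite {i. c i \<noteq> 0} \<and> (\<forall>i. c i \<in> G i) \<and> x = (\<Sum>i | c i \<noteq> 0. c i))"

definition gdeg :: "('i::linorder \<Rightarrow> 'v::ab_group_add set) \<Rightarrow> 'v \<Rightarrow> 'i" where
  "gdeg G x = Max {i. comp G x i \<noteq> 0}"

definition lf :: "('i::linorder \<Rightarrow> 'v::ab_group_add set) \<Rightarrow> 'v \<Rightarrow> 'v" where
  "lf G x = comp G x (gdeg G x)"

definition dsum_of :: "('i \<Rightarrow> 'v::ab_group_add set) \<Rightarrow> 'i set \<Rightarrow> 'v set" where
  "dsum_of G I = {x. \<exists>c S. finite S \<and> S \<subseteq> I \<and> (\<forall>i\<in>S. c i \<in> G i) \<and> x = sum c S}"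

definition good_monoid :: "'a::{comm_monoid_add, wellorder} itself \<Rightarrow> bool" where
  "good_monoid _ \<longleftrightarrow>
     (\<exists>S::'a set. finite S \<and> (\<forall>a. \<exists>xs. set xs \<subseteq> S \<and> a = sum_list xs)) \<and>
     (\<forall>a b c::'a. a + c = b + c \<longrightarrow> a = b) \<and>
     (\<forall>a::'a. a \<noteq> 0 \<longrightarrow> 0 < a) \<and>
     (\<forall>a b c::'a. a \<le> b \<longrightarrow> a + c \<le> b + c)"

definition good_action :: "('a::{comm_monoid_add, wellorder} \<Rightarrow> 'b::wellorder \<Rightarrow> 'b) \<Rightarrow> bool" where
  "good_action act \<longleftrightarrow>
     (\<forall>b. act 0 b = b) \<and>
     (\<forall>a a' b. act (a + a') b = act a (act a' b)) \<and>
     (\<forall>a a' b. a \<le> a' \<longrightarrow> act a b \<le> act a' b) \<and>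
     (\<forall>a b b'. b \<le> b' \<longrightarrow> act a b \<le> act a b') \<and>
     (\<forall>a a' b. act a b = act a' b \<longrightarrow> a = a') \<and>
     (\<forall>a b b'. act a b = act a b' \<longrightarrow> b = b')"

definition k_algebra :: "('k::field \<Rightarrow> 'r::comm_ring_1) \<Rightarrow> bool" where
  "k_algebra \<iota> \<longleftrightarrow> \<iota> 1 = 1 \<and> (\<forall>x y. \<iota> (x + y) = \<iota> x + \<iota> y) \<and> (\<forall>x y. \<iota> (x * y) = \<iota> x * \<iota> y)"

definition noetherian_module :: "('r::comm_ring_1 \<Rightarrow> 'n::ab_group_add \<Rightarrow> 'n) \<Rightarrow> bool" where
  "noetherian_module smul \<longleftrightarrow>
     module smul \<and>
     (\<forall>M. module.subspace smul M \<longrightarrow> (\<exists>F. finite F \<and> F \<subseteq> M \<and> module.span smul F = M))"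

definition noetherian_ring :: "'r::comm_ring_1 itself \<Rightarrow> bool" where
  "noetherian_ring _ \<longleftrightarrow> noetherian_module ((*) :: 'r \<Rightarrow> 'r \<Rightarrow> 'r)"

definition grading_pair ::
  "('k::field \<Rightarrow> 'r::comm_ring_1) \<Rightarrow> ('r \<Rightarrow> 'n::ab_group_add \<Rightarrow> 'n) \<Rightarrow>
   ('a::{comm_monoid_add, wellorder} \<Rightarrow> 'r set) \<Rightarrow> ('a \<Rightarrow> 'b::wellorder \<Rightarrow> 'b) \<Rightarrow>
   ('b \<Rightarrow> 'n set) \<Rightarrow> bool" where
  "grading_pair \<iota> smul RA act NB \<longleftrightarrow>
     k_algebra \<iota> \<and> noetherian_ring TYPE('r) \<and> noetherian_module smul \<and>
     good_monoid TYPE('a) \<and> good_action act \<and>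
     is_dsum RA \<and> (\<forall>a c x. x \<in> RA a \<longrightarrow> \<iota> c * x \<in> RA a) \<and>
     (\<forall>a a' x y. x \<in> RA a \<longrightarrow> y \<in> RA a' \<longrightarrow> x * y \<in> RA (a + a')) \<and>
     is_dsum NB \<and>
     (\<forall>a b r m. r \<in> RA a \<longrightarrow> m \<in> NB b \<longrightarrow> smul r m \<in> NB (act a b))"

definition refines ::
  "('a::{comm_monoid_add, wellorder} \<Rightarrow> 'r::comm_ring_1 set) \<Rightarrow> ('a \<Rightarrow> 'b::wellorder \<Rightarrow> 'b) \<Rightarrow>
   ('b \<Rightarrow> 'n::ab_group_add set) \<Rightarrow>
   ('a2::{comm_monoid_add, wellorder} \<Rightarrow> 'r set) \<Rightarrow> ('a2 \<Rightarrow> 'b2::wellorder \<Rightarrow> 'b2) \<Rightarrow>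
   ('b2 \<Rightarrow> 'n set) \<Rightarrow> bool" where
  "refines RA act NB RA' act' NB' \<longleftrightarrow>
     (\<exists>f g. f 0 = 0 \<and> (\<forall>a a'. f (a + a') = f a + f a') \<and> mono f \<and>
            (\<forall>a'. RA' a' = dsum_of RA (f -` {a'})) \<and>
            mono g \<and> (\<forall>b'. NB' b' = dsum_of NB (g -` {b'})) \<and>
            (\<forall>a b. act' (f a) (g b) = g (act a b)))"

definition macaulay_basis ::
  "('r::comm_ring_1 \<Rightarrow> 'n::ab_group_add \<Rightarrow> 'n) \<Rightarrow> ('b::wellorder \<Rightarrow> 'n set) \<Rightarrow> 'n set \<Rightarrow> 'n set \<Rightarrow> bool" where
  "macaulay_basis smul NB M X \<longleftrightarrow>
     finite X \<and> X \<subseteq> M \<and> 0 \<notin> X \<and>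
     module.span smul {lf NB p | p. p \<in> M \<and> p \<noteq> 0} = module.span smul (lf NB ` X)"

end

(* Let d be the fine degree of a nonzero p in M. Since g is monotone, the coarse leading form
   of p is its coarse component in degree g d. Expanding the fine leading form of p in the fine
   leading forms of X and keeping only the homogeneous parts of the coefficients that land in
   degree d gives q in M with the same fine leading form as p and nothing above degree d; by
   compatibility of the actions its coarse component in degree g d is a combination of coarse
   leading forms of X. The remainder p - q has fine degree < d and contributes to coarse degree
   g d only if its own fine degree is also sent to g d, so well-founded induction on d
   concludes. *)
theory Submission
  imports Defs
begin

lemma is_dsum_zero: "is_dsum G \<Longrightarrow> 0 \<in> G i"
  unfolding is_dsum_def by blast

lemma is_dsum_add: "is_dsum G \<Longrightarrow> x \<in> G i \<Longrightarrow> y \<in> G i \<Longrightarrow> x + y \<in> G i"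
  unfolding is_dsum_def by blast

lemma comp_decomposition:
  assumes "is_dsum G"
  shows "finite {i. comp G x i \<noteq> 0}" and "comp G x i \<in> G i"
    and "(\<Sum>i | comp G x i \<noteq> 0. comp G x i) = x"
proof -
  let ?P = "\<lambda>c. finite {i. c i \<noteq> 0} \<and> (\<forall>i. c i \<in> G i) \<and> x = (\<Sum>i | c i \<noteq> 0. c i)"
  have "\<exists>!c. ?P c" using assms unfolding is_dsum_def by blast
  then have "?P (comp G x)" unfolding comp_def by (rule theI')
  then show "finite {i. comp G x i \<noteq> 0}" "comp G x i \<in> G i"
    "(\<Sum>i | comp G x i \<noteq> 0. comp G x i) = x" by auto
qed

lemmas finite_comp_support = comp_decomposition(1)
  and comp_mem = comp_decomposition(2)
  and sum_comp = comp_decomposition(3)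

lemma sum_comp_superset:
  assumes "is_dsum G" and "finite S" and "{i. comp G x i \<noteq> 0} \<subseteq> S"
  shows "(\<Sum>i\<in>S. comp G x i) = x"
proof -
  have "(\<Sum>i\<in>S. comp G x i) = (\<Sum>i | comp G x i \<noteq> 0. comp G x i)"
    by (rule sum.mono_neutral_right[OF assms(2,3)]) auto
  then show ?thesis using sum_comp[OF assms(1)] by simp
qed

lemma comp_unique:
  assumes "is_dsum G" and "finite S" and "\<And>i. c i \<in> G i"
    and "\<And>i. i \<notin> S \<Longrightarrow> c i = 0" and "x = sum c S"
  shows "comp G x = c"
proof -
  let ?P = "\<lambda>c. finite {i. c i \<noteq> 0} \<and> (\<forall>i. c i \<in> G i) \<and> x = (\<Sum>i | c i \<noteq> 0. c i)"
  have supp: "{i. c i \<noteq> 0} \<subseteq> S" using assms(4) by auto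
  have "sum c S = (\<Sum>i | c i \<noteq> 0. c i)"
    by (rule sum.mono_neutral_right[OF assms(2) supp]) auto
  then have "?P c" using finite_subset[OF supp assms(2)] assms(3,5) by simp
  moreover have "\<exists>!c. ?P c" using assms(1) unfolding is_dsum_def by blast
  ultimately show ?thesis unfolding comp_def by (rule the1_equality[rotated])
qed

lemma comp_homogeneous:
  assumes "is_dsum G" and "x \<in> G j"
  shows "comp G x = (\<lambda>i. if i = j then x else 0)"
  by (rule comp_unique[OF assms(1), of "{j}"]) (auto simp: assms is_dsum_zero)

lemma comp_zero:
  assumes "is_dsum G"
  shows "comp G 0 i = 0"
  using comp_homogeneous[OF assms is_dsum_zero[OF assms]] by simp

lemma comp_add:
  assumes "is_dsum G"
  shows "comp G (x + y) i = comp G x i + comp G y i"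
proof -
  let ?S = "{i. comp G x i \<noteq> 0} \<union> {i. comp G y i \<noteq> 0}"
  have S: "finite ?S" using finite_comp_support[OF assms] by blast
  have "comp G (x + y) = (\<lambda>i. comp G x i + comp G y i)"
  proof (rule comp_unique[OF assms S])
    show "comp G x i + comp G y i \<in> G i" for i
      by (intro is_dsum_add comp_mem assms)
    show "x + y = (\<Sum>i\<in>?S. comp G x i + comp G y i)"
      using sum_comp_superset[OF assms S, of x] sum_comp_superset[OF assms S, of y]
      by (simp add: sum.distrib)
  qed auto
  then show ?thesis by simp
qed

lemma comp_neg:
  assumes "is_dsum G"
  shows "comp G (- x) i = - comp G x i"
  using comp_add[OF assms, of x "- x" i] comp_zero[OF assms]
  by (metis add.right_inverse neg_eq_iff_add_eq_0)

lemma comp_diff: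
  assumes "is_dsum G"
  shows "comp G (x - y) i = comp G x i - comp G y i"
  using comp_add[OF assms, of x "- y" i] comp_neg[OF assms, of y i] by simp

lemma comp_sum:
  assumes "is_dsum G" and "finite T"
  shows "comp G (\<Sum>t\<in>T. h t) i = (\<Sum>t\<in>T. comp G (h t) i)"
  using assms(2) by induction (simp_all add: comp_zero[OF assms(1)] comp_add[OF assms(1)])

lemma le_gdeg:
  assumes "is_dsum G" and "comp G x i \<noteq> 0"
  shows "i \<le> gdeg G x"
  unfolding gdeg_def using assms finite_comp_support[OF assms(1)] by (intro Max_ge) auto

lemma comp_gdeg_nonzero:
  assumes "is_dsum G" and "x \<noteq> 0"
  shows "comp G x (gdeg G x) \<noteq> 0"
proof -
  have "{i. comp G x i \<noteq> 0} \<noteq> {}"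
    using sum_comp[OF assms(1), of x] assms(2) by force
  then show ?thesis
    unfolding gdeg_def using Max_in[OF finite_comp_support[OF assms(1)]] by blast
qed

lemma lf_mem: "is_dsum G \<Longrightarrow> lf G x \<in> G (gdeg G x)"
  unfolding lf_def by (rule comp_mem)

lemma comp_coarsening:
  assumes fine: "is_dsum G" and coarse: "is_dsum G'"
    and coarsening: "\<And>b'. G' b' = dsum_of G (g -` {b'})"
  shows "comp G' x b' = (\<Sum>b | comp G x b \<noteq> 0 \<and> g b = b'. comp G x b)"
proof -
  let ?S = "{b. comp G x b \<noteq> 0}"
  let ?c = "\<lambda>b'. \<Sum>b | comp G x b \<noteq> 0 \<and> g b = b'. comp G x b"
  have S: "finite ?S" by (rule finite_comp_support[OF fine])
  have "comp G' x = ?c"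
  proof (rule comp_unique[OF coarse finite_imageI[OF S]])
    fix b'
    have "finite {b. comp G x b \<noteq> 0 \<and> g b = b'}"
      by (rule finite_subset[OF _ S]) auto
    then have "?c b' \<in> dsum_of G (g -` {b'})"
      unfolding dsum_of_def using comp_mem[OF fine] by blast
    then show "?c b' \<in> G' b'" using coarsening by simp
    show "b' \<notin> g ` ?S \<Longrightarrow> ?c b' = 0" by (auto intro!: sum.neutral)
  next
    have "x = sum (comp G x) ?S" using sum_comp[OF fine] by simp
    also have "\<dots> = (\<Sum>b'\<in>g ` ?S. sum (comp G x) {b \<in> ?S. g b = b'})"
      by (rule sum.image_gen[OF S])
    also have "\<dots> = sum ?c (g ` ?S)"
      by (simp add: Collect_conj_eq)
    finally show "x = sum ?c (g ` ?S)" .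
  qed
  then show ?thesis by simp
qed

lemma le_coarse_gdeg:
  assumes fine: "is_dsum G" and coarse: "is_dsum G'"
    and coarsening: "\<And>b'. G' b' = dsum_of G (g -` {b'})" and "mono g"
    and "comp G' x b' \<noteq> 0"
  shows "b' \<le> g (gdeg G x)"
proof -
  have "{b. comp G x b \<noteq> 0 \<and> g b = b'} \<noteq> {}"
  proof
    assume empty: "{b. comp G x b \<noteq> 0 \<and> g b = b'} = {}"
    have "comp G' x b' = 0" unfolding comp_coarsening[OF fine coarse coarsening] empty by simp
    with assms(5) show False by simp
  qed
  then obtain b where "comp G x b \<noteq> 0" and "g b = b'" by blast
  then show ?thesis using le_gdeg[OF fine] \<open>mono g\<close> by (metis monoD)
qed

text \<open>The fine leading form is the only summand of its coarse component living in the
  top fine degree, so it cannot be cancelled there.\<close>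
lemma comp_coarse_gdeg_nonzero:
  assumes fine: "is_dsum G" and coarse: "is_dsum G'"
    and coarsening: "\<And>b'. G' b' = dsum_of G (g -` {b'})" and "x \<noteq> 0"
  shows "comp G' x (g (gdeg G x)) \<noteq> 0"
proof
  let ?d = "gdeg G x"
  let ?T = "{b. comp G x b \<noteq> 0 \<and> g b = g ?d}"
  have T: "finite ?T" by (rule finite_subset[OF _ finite_comp_support[OF fine, of x]]) auto
  assume "comp G' x (g ?d) = 0"
  then have "comp G (\<Sum>b\<in>?T. comp G x b) ?d = 0"
    using comp_coarsening[OF fine coarse coarsening, of x] comp_zero[OF fine] by simp
  moreover have "comp G (\<Sum>b\<in>?T. comp G x b) ?d = (\<Sum>b\<in>?T. if ?d = b then comp G x b else 0)"
    by (simp add: comp_sum[OF fine T] comp_homogeneous[OF fine comp_mem[OF fine]])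
  ultimately show False using T comp_gdeg_nonzero[OF fine \<open>x \<noteq> 0\<close>] by simp
qed

lemma gdeg_coarsening:
  assumes fine: "is_dsum G" and coarse: "is_dsum G'"
    and coarsening: "\<And>b'. G' b' = dsum_of G (g -` {b'})" and "mono g" and "x \<noteq> 0"
  shows "gdeg G' x = g (gdeg G x)"
  unfolding gdeg_def[of G']
  using comp_coarse_gdeg_nonzero[OF fine coarse coarsening \<open>x \<noteq> 0\<close>]
    le_coarse_gdeg[OF fine coarse coarsening \<open>mono g\<close>] finite_comp_support[OF coarse, of x]
  by (intro Max_eqI) (auto simp: gdeg_def)

lemma coarse_comp_nonzero_below:
  fixes g :: "'b::linorder \<Rightarrow> 'b2::linorder"
  assumes fine: "is_dsum G" and coarse: "is_dsum G'"
    and coarsening: "\<And>b'. G' b' = dsum_of G (g -` {b'})" and "mono g"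
    and "comp G' y (g d) \<noteq> 0" and "\<And>k. d \<le> k \<Longrightarrow> comp G y k = 0"
  shows "gdeg G y < d" and "g (gdeg G y) = g d"
proof -
  have "y \<noteq> 0" using assms(5) comp_zero[OF coarse] by auto
  then show lt: "gdeg G y < d"
    using comp_gdeg_nonzero[OF fine] assms(6) by (meson not_le)
  have "g d \<le> g (gdeg G y)" by (rule le_coarse_gdeg[OF fine coarse coarsening]) fact+
  moreover have "g (gdeg G y) \<le> g d" using \<open>mono g\<close> lt by (simp add: monoD)
  ultimately show "g (gdeg G y) = g d" by simp
qed

lemma (in module) span_image_finite_sum:
  assumes "finite X" and "y \<in> span (h ` X)"
  obtains u where "y = (\<Sum>x\<in>X. scale (u x) (h x))"
proof -
  let ?sums = "range (\<lambda>u. \<Sum>x\<in>X. scale (u x) (h x))"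
  have "subspace ?sums"
  proof (rule subspaceI)
    show "0 \<in> ?sums" using rangeI[of "\<lambda>u. \<Sum>x\<in>X. scale (u x) (h x)" "\<lambda>_. 0"] by simp
    show "y + z \<in> ?sums" if "y \<in> ?sums" and "z \<in> ?sums" for y z
    proof -
      from that obtain u v where "y = (\<Sum>x\<in>X. scale (u x) (h x))" "z = (\<Sum>x\<in>X. scale (v x) (h x))"
        by blast
      then have "y + z = (\<Sum>x\<in>X. scale (u x + v x) (h x))"
        by (simp add: scale_left_distrib sum.distrib)
      then show ?thesis using rangeI[of "\<lambda>u. \<Sum>x\<in>X. scale (u x) (h x)" "\<lambda>x. u x + v x"] by simp
    qed
    show "scale c y \<in> ?sums" if "y \<in> ?sums" for c y
    proof -
      from that obtain u where "y = (\<Sum>x\<in>X. scale (u x) (h x))" by blast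
      then have "scale c y = (\<Sum>x\<in>X. scale (c * u x) (h x))"
        by (simp add: scale_sum_right)
      then show ?thesis using rangeI[of "\<lambda>u. \<Sum>x\<in>X. scale (u x) (h x)" "\<lambda>x. c * u x"] by simp
    qed
  qed
  moreover have "h x0 \<in> ?sums" if "x0 \<in> X" for x0
  proof -
    have "h x0 = (\<Sum>x\<in>X. scale (if x = x0 then 1 else 0) (h x))"
      using \<open>finite X\<close> that by (simp add: if_distrib[of "\<lambda>c. scale c _"] cong: if_cong)
    then show ?thesis
      using rangeI[of "\<lambda>u. \<Sum>x\<in>X. scale (u x) (h x)" "\<lambda>x. if x = x0 then 1 else 0"] by simp
  qed
  ultimately have "span (h ` X) \<subseteq> ?sums" by (intro span_minimal) auto
  then show ?thesis using assms(2) that by blast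
qed

locale graded_module = module smul
  for smul :: "'r::comm_ring_1 \<Rightarrow> 'n::ab_group_add \<Rightarrow> 'n" +
  fixes RA :: "'a \<Rightarrow> 'r set" and act :: "'a \<Rightarrow> 'b::wellorder \<Rightarrow> 'b" and NB :: "'b \<Rightarrow> 'n set"
  assumes dsum_RA: "is_dsum RA" and dsum_NB: "is_dsum NB"
    and smul_graded: "r \<in> RA a \<Longrightarrow> m \<in> NB b \<Longrightarrow> smul r m \<in> NB (act a b)"
    and act_mono: "b \<le> b' \<Longrightarrow> act a b \<le> act a b'"
    and act_inj: "act a b = act a b' \<Longrightarrow> b = b'"
begin

lemma comp_smul_homogeneous_vector:
  assumes "y \<in> NB j"
  shows "comp NB (smul r y) k = (\<Sum>a | comp RA r a \<noteq> 0 \<and> act a j = k. smul (comp RA r a) y)"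
proof -
  let ?S = "{a. comp RA r a \<noteq> 0}"
  have S: "finite ?S" by (rule finite_comp_support[OF dsum_RA])
  have "comp NB (smul r y) k = comp NB (\<Sum>a\<in>?S. smul (comp RA r a) y) k"
    by (simp add: sum_comp[OF dsum_RA] flip: scale_sum_left)
  also have "\<dots> = (\<Sum>a\<in>?S. if act a j = k then smul (comp RA r a) y else 0)"
    unfolding comp_sum[OF dsum_NB S]
  proof (rule sum.cong[OF refl])
    fix a
    have "smul (comp RA r a) y \<in> NB (act a j)"
      by (rule smul_graded[OF comp_mem[OF dsum_RA] assms])
    then show "comp NB (smul (comp RA r a) y) k = (if act a j = k then smul (comp RA r a) y else 0)"
      by (auto simp: comp_homogeneous[OF dsum_NB])
  qed
  also have "\<dots> = (\<Sum>a | comp RA r a \<noteq> 0 \<and> act a j = k. smul (comp RA r a) y)"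
    using S by (simp add: sum.inter_filter[symmetric])
  finally show ?thesis .
qed

lemma comp_smul_homogeneous_scalar:
  assumes "r \<in> RA a"
  shows "comp NB (smul r m) k =
    (\<Sum>j | comp NB m j \<noteq> 0. if k = act a j then smul r (comp NB m j) else 0)"
proof -
  let ?S = "{j. comp NB m j \<noteq> 0}"
  have S: "finite ?S" by (rule finite_comp_support[OF dsum_NB])
  have "comp NB (smul r m) k = comp NB (\<Sum>j\<in>?S. smul r (comp NB m j)) k"
    by (simp add: sum_comp[OF dsum_NB] flip: scale_sum_right)
  also have "\<dots> = (\<Sum>j\<in>?S. if k = act a j then smul r (comp NB m j) else 0)"
    unfolding comp_sum[OF dsum_NB S]
  proof (rule sum.cong[OF refl])
    fix j
    have "smul r (comp NB m j) \<in> NB (act a j)"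
      by (rule smul_graded[OF assms comp_mem[OF dsum_NB]])
    then show "comp NB (smul r (comp NB m j)) k = (if k = act a j then smul r (comp NB m j) else 0)"
      by (simp add: comp_homogeneous[OF dsum_NB])
  qed
  finally show ?thesis .
qed

lemma comp_smul_act:
  assumes "r \<in> RA a"
  shows "comp NB (smul r m) (act a j) = smul r (comp NB m j)"
proof -
  have "act a j = act a i \<longleftrightarrow> i = j" for i using act_inj by blast
  then have "comp NB (smul r m) (act a j) =
      (\<Sum>i | comp NB m i \<noteq> 0. if i = j then smul r (comp NB m i) else 0)"
    by (simp only: comp_smul_homogeneous_scalar[OF assms])
  also have "\<dots> = smul r (comp NB m j)"
    using finite_comp_support[OF dsum_NB, of m] by (simp add: sum.delta)
  finally show ?thesis .
qed

lemma comp_smul_above_gdeg: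
  assumes "r \<in> RA a" and "act a (gdeg NB m) < k"
  shows "comp NB (smul r m) k = 0"
proof (cases "k \<in> range (act a)")
  case True
  then obtain j where k: "k = act a j" by blast
  then have "\<not> j \<le> gdeg NB m" using act_mono assms(2) by (meson leD)
  then have "comp NB m j = 0" using le_gdeg[OF dsum_NB] by blast
  then show ?thesis by (simp add: k comp_smul_act[OF assms(1)])
next
  case False
  then show ?thesis
    unfolding comp_smul_homogeneous_scalar[OF assms(1)] by (intro sum.neutral) auto
qed

lemma comp_sum_smul_above:
  assumes "finite I" and "\<And>i. i \<in> I \<Longrightarrow> s i \<in> RA (snd i) \<and> act (snd i) (gdeg NB (fst i)) = d"
    and "d < k"
  shows "comp NB (\<Sum>i\<in>I. smul (s i) (fst i)) k = 0"
  unfolding comp_sum[OF dsum_NB assms(1)]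
proof (intro sum.neutral ballI)
  fix i assume "i \<in> I"
  then show "comp NB (smul (s i) (fst i)) k = 0"
    using assms(2,3) by (intro comp_smul_above_gdeg[of _ "snd i"]) auto
qed

lemma leading_form_lift:
  assumes "macaulay_basis smul NB M X" and "p \<in> M" and "p \<noteq> 0"
  obtains I :: "('n \<times> 'a) set" and s
  where "finite I"
    and "\<And>i. i \<in> I \<Longrightarrow> fst i \<in> X \<and> s i \<in> RA (snd i) \<and> act (snd i) (gdeg NB (fst i)) = gdeg NB p"
    and "comp NB (\<Sum>i\<in>I. smul (s i) (fst i)) (gdeg NB p) = lf NB p"
proof -
  let ?d = "gdeg NB p"
  have X: "finite X" and span_eq: "span {lf NB p | p. p \<in> M \<and> p \<noteq> 0} = span (lf NB ` X)"
    using assms(1) unfolding macaulay_basis_def by auto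
  have "lf NB p \<in> {lf NB p | p. p \<in> M \<and> p \<noteq> 0}" using assms(2,3) by blast
  then have "lf NB p \<in> span (lf NB ` X)" unfolding span_eq[symmetric] by (rule span_base)
  then obtain u where u: "lf NB p = (\<Sum>x\<in>X. smul (u x) (lf NB x))"
    by (rule span_image_finite_sum[OF X])
  define A where "A x = {a. comp RA (u x) a \<noteq> 0 \<and> act a (gdeg NB x) = ?d}" for x
  have A: "finite (A x)" for x
    unfolding A_def by (rule finite_subset[OF _ finite_comp_support[OF dsum_RA, of "u x"]]) auto
  define s where "s i = comp RA (u (fst i)) (snd i)" for i
  have "(\<Sum>i\<in>Sigma X A. smul (s i) (fst i)) = (\<Sum>x\<in>X. \<Sum>a\<in>A x. smul (comp RA (u x) a) x)"
    unfolding sum.Sigma[OF X ballI[OF A]] by (simp add: s_def split_def)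
  then have "comp NB (\<Sum>i\<in>Sigma X A. smul (s i) (fst i)) ?d
      = (\<Sum>x\<in>X. \<Sum>a\<in>A x. comp NB (smul (comp RA (u x) a) x) ?d)"
    by (simp only: comp_sum[OF dsum_NB X] comp_sum[OF dsum_NB A])
  also have "\<dots> = (\<Sum>x\<in>X. \<Sum>a\<in>A x. smul (comp RA (u x) a) (lf NB x))"
  proof (intro sum.cong refl)
    fix x a assume "a \<in> A x"
    then have "?d = act a (gdeg NB x)" by (simp add: A_def)
    then show "comp NB (smul (comp RA (u x) a) x) ?d = smul (comp RA (u x) a) (lf NB x)"
      unfolding lf_def by (simp only: comp_smul_act[OF comp_mem[OF dsum_RA]])
  qed
  also have "\<dots> = (\<Sum>x\<in>X. comp NB (smul (u x) (lf NB x)) ?d)"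
    unfolding comp_smul_homogeneous_vector[OF lf_mem[OF dsum_NB]] A_def ..
  also have "\<dots> = comp NB (lf NB p) ?d"
    unfolding u by (rule comp_sum[OF dsum_NB X, symmetric])
  also have "\<dots> = lf NB p"
    by (simp add: comp_homogeneous[OF dsum_NB lf_mem[OF dsum_NB]])
  finally show ?thesis
    using that[of "Sigma X A" s] X A by (auto simp: s_def A_def comp_mem[OF dsum_RA])
qed

end

locale graded_refinement = module smul +
  fine: graded_module smul RA act NB + coarse: graded_module smul RA' act' NB'
  for smul :: "'r::comm_ring_1 \<Rightarrow> 'n::ab_group_add \<Rightarrow> 'n"
    and RA :: "'a \<Rightarrow> 'r set" and act :: "'a \<Rightarrow> 'b::wellorder \<Rightarrow> 'b" and NB :: "'b \<Rightarrow> 'n set"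
    and RA' :: "'a2 \<Rightarrow> 'r set" and act' :: "'a2 \<Rightarrow> 'b2::wellorder \<Rightarrow> 'b2" and NB' :: "'b2 \<Rightarrow> 'n set" +
  fixes f :: "'a \<Rightarrow> 'a2" and g :: "'b \<Rightarrow> 'b2"
  assumes coarse_RA: "r \<in> RA a \<Longrightarrow> r \<in> RA' (f a)"
    and coarse_NB: "NB' b' = dsum_of NB (g -` {b'})"
    and mono_g: "mono g"
    and act_compat: "act' (f a) (g b) = g (act a b)"
begin

lemma lf_coarse:
  assumes "x \<noteq> 0"
  shows "lf NB' x = comp NB' x (g (gdeg NB x))"
  unfolding lf_def gdeg_coarsening[OF fine.dsum_NB coarse.dsum_NB coarse_NB mono_g assms] ..

lemma comp_coarse_smul:
  assumes "s \<in> RA a" and "x \<noteq> 0"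
  shows "comp NB' (smul s x) (g (act a (gdeg NB x))) = smul s (lf NB' x)"
  unfolding act_compat[symmetric] lf_coarse[OF assms(2)]
  by (rule coarse.comp_smul_act[OF coarse_RA[OF assms(1)]])

lemma comp_coarse_sum_smul_in_span:
  assumes "finite I" and "0 \<notin> X"
    and "\<And>i. i \<in> I \<Longrightarrow> fst i \<in> X \<and> s i \<in> RA (snd i) \<and> act (snd i) (gdeg NB (fst i)) = d"
  shows "comp NB' (\<Sum>i\<in>I. smul (s i) (fst i)) (g d) \<in> span (lf NB' ` X)"
proof -
  have "comp NB' (\<Sum>i\<in>I. smul (s i) (fst i)) (g d) = (\<Sum>i\<in>I. smul (s i) (lf NB' (fst i)))"
    unfolding comp_sum[OF coarse.dsum_NB assms(1)]
  proof (rule sum.cong[OF refl])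
    fix i assume "i \<in> I"
    then have "s i \<in> RA (snd i)" and "fst i \<noteq> 0" and "g d = g (act (snd i) (gdeg NB (fst i)))"
      using assms(2) assms(3)[OF \<open>i \<in> I\<close>] by auto
    then show "comp NB' (smul (s i) (fst i)) (g d) = smul (s i) (lf NB' (fst i))"
      by (simp add: comp_coarse_smul)
  qed
  also have "\<dots> \<in> span (lf NB' ` X)"
    using assms(3) by (intro span_sum span_scale span_base) auto
  finally show ?thesis .
qed

lemma coarse_comp_gdeg_in_span:
  assumes mac: "macaulay_basis smul NB M X" and M: "subspace M"
  shows "p \<in> M \<Longrightarrow> p \<noteq> 0 \<Longrightarrow> comp NB' p (g (gdeg NB p)) \<in> span (lf NB' ` X)"
proof (induction "gdeg NB p" arbitrary: p rule: less_induct)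
  case less
  let ?d = "gdeg NB p"
  have X: "X \<subseteq> M" "0 \<notin> X" using mac unfolding macaulay_basis_def by auto
  obtain I s where I: "finite I"
    and Is: "\<And>i. i \<in> I \<Longrightarrow> fst i \<in> X \<and> s i \<in> RA (snd i) \<and> act (snd i) (gdeg NB (fst i)) = ?d"
    and q_top: "comp NB (\<Sum>i\<in>I. smul (s i) (fst i)) ?d = lf NB p"
    using fine.leading_form_lift[OF mac less.prems] by blast
  define q where "q = (\<Sum>i\<in>I. smul (s i) (fst i))"
  have "q \<in> M"
    unfolding q_def using Is X by (intro subspace_sum[OF M] subspace_scale[OF M]) auto
  have q_above: "comp NB q k = 0" if "?d < k" for k
    unfolding q_def using Is by (intro fine.comp_sum_smul_above[OF I _ that]) blast
  have q_coarse: "comp NB' q (g ?d) \<in> span (lf NB' ` X)"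
    unfolding q_def using I X(2) Is by (rule comp_coarse_sum_smul_in_span)
  define r where "r = p - q"
  have r_above: "comp NB r k = 0" if "?d \<le> k" for k
  proof (cases "k = ?d")
    case True
    then show ?thesis using q_top by (simp add: r_def q_def comp_diff[OF fine.dsum_NB] lf_def)
  next
    case False
    then have "comp NB p k = 0" using le_gdeg[OF fine.dsum_NB, of p k] that by fastforce
    then show ?thesis using False that q_above by (simp add: r_def comp_diff[OF fine.dsum_NB])
  qed
  have "comp NB' r (g ?d) \<in> span (lf NB' ` X)"
  proof (cases "comp NB' r (g ?d) = 0")
    case False
    then have "gdeg NB r < ?d" and "g (gdeg NB r) = g ?d"
      using coarse_comp_nonzero_below[OF fine.dsum_NB coarse.dsum_NB coarse_NB mono_g] r_above
      by blast+
    moreover have "r \<in> M" and "r \<noteq> 0"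
      using \<open>q \<in> M\<close> less.prems False comp_zero[OF coarse.dsum_NB]
      by (auto simp: r_def intro: subspace_diff[OF M])
    ultimately show ?thesis using less.hyps by metis
  qed (simp add: span_zero)
  moreover have "comp NB' p (g ?d) = comp NB' r (g ?d) + comp NB' q (g ?d)"
    by (simp add: r_def comp_diff[OF coarse.dsum_NB])
  ultimately show ?case using q_coarse by (simp add: span_add)
qed

end

lemma graded_module_of_grading_pair:
  assumes "grading_pair \<iota> smul RA act NB"
  shows "graded_module smul RA act NB"
  using assms
  unfolding grading_pair_def noetherian_module_def good_action_def graded_module_def
    graded_module_axioms_def
  by blast

lemma graded_refinement_of_refines:
  assumes "grading_pair \<iota> smul RA act NB" and "grading_pair \<iota> smul RA' act' NB'"
    and "refines RA act NB RA' act' NB'"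
  obtains f g where "graded_refinement smul RA act NB RA' act' NB' f g"
proof -
  obtain f g where f: "\<And>a'. RA' a' = dsum_of RA (f -` {a'})"
    and g: "mono g" "\<And>b'. NB' b' = dsum_of NB (g -` {b'})"
    and compat: "\<And>a b. act' (f a) (g b) = g (act a b)"
    using assms(3) unfolding refines_def by blast
  have "r \<in> RA' (f a)" if "r \<in> RA a" for r a
  proof -
    have "r \<in> dsum_of RA (f -` {f a})"
      unfolding dsum_of_def using that by (intro CollectI exI[of _ "\<lambda>_. r"] exI[of _ "{a}"]) simp
    then show ?thesis using f by simp
  qed
  then have "graded_refinement smul RA act NB RA' act' NB' f g"
    using graded_module_of_grading_pair[OF assms(1)] graded_module_of_grading_pair[OF assms(2)]
      graded_module.axioms(1)[OF graded_module_of_grading_pair[OF assms(1)]] g compat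
    by (simp add: graded_refinement_def graded_refinement_axioms_def)
  then show ?thesis by (rule that)
qed

theorem mainTheorem6:
  fixes \<iota> :: "'k::field \<Rightarrow> 'r::comm_ring_1"
    and smul :: "'r \<Rightarrow> 'n::ab_group_add \<Rightarrow> 'n"
    and RA :: "'a::{comm_monoid_add, wellorder} \<Rightarrow> 'r set"
    and act :: "'a \<Rightarrow> 'b::wellorder \<Rightarrow> 'b"
    and NB :: "'b \<Rightarrow> 'n set"
    and RA' :: "'a2::{comm_monoid_add, wellorder} \<Rightarrow> 'r set"
    and act' :: "'a2 \<Rightarrow> 'b2::wellorder \<Rightarrow> 'b2"
    and NB' :: "'b2 \<Rightarrow> 'n set"
    and M X :: "'n set"
  assumes "grading_pair \<iota> smul RA act NB"
    and "grading_pair \<iota> smul RA' act' NB'"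
    and "refines RA act NB RA' act' NB'"
    and "module.subspace smul M"
    and "macaulay_basis smul NB M X"
    and "module.span smul X = M"
  shows "macaulay_basis smul NB' M X"
proof -
  obtain f g where "graded_refinement smul RA act NB RA' act' NB' f g"
    using graded_refinement_of_refines[OF assms(1-3)] .
  then interpret graded_refinement smul RA act NB RA' act' NB' f g .
  have X: "finite X" "X \<subseteq> M" "0 \<notin> X"
    using assms(5) unfolding macaulay_basis_def by auto
  have "{lf NB' p | p. p \<in> M \<and> p \<noteq> 0} \<subseteq> span (lf NB' ` X)"
    using coarse_comp_gdeg_in_span[OF assms(5,4)] lf_coarse by auto
  moreover have "lf NB' ` X \<subseteq> span {lf NB' p | p. p \<in> M \<and> p \<noteq> 0}"
    using X by (auto intro: span_base)
  ultimately show ?thesis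
    using X unfolding macaulay_basis_def span_eq by blast
qed

end
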